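(* Let $n\ge1$ and let $\mathbb{F}$ be any field. Then $\mathrm{Der}_{\mathrm{inn}}(\mathbb{F}(SD_{8n}))$ has dimension $3(2n-1)$ over $\mathbb{F}$ if $n$ is even and $6(n-1)$ if $n$ is odd. Moreover: (i) if $n$ is even, an $\mathbb{F}$-basis is $\{d_g\mid g\in\{a^{2k}\mid1\le k\le n-1\}\cup\{a^{2k+1}\mid -\frac n2\le k\le\frac n2-1\}\cup\{a^{2k}b,\ a^{2k-1}b\mid 1\le k\le 2n-1\}\}$; (ii) if $n$ is odd, an $\mathbb{F}$-basis is $\{d_g\mid g\in\{a^{2k}\mid1\le k\le n-1\}\cup\{a^{2k+1}\mid -\frac{n-1}2\le k\le\frac{n-1}2-1\}\cup\{a^{4k}b,\ a^{4k+1}b,\ a^{4k+2}b,\ a^{4k+3}b\mid 1\le k\le n-1\}\}$.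
   Context: $SD_{8n}=\langle a,b\mid a^{4n}=b^2=1,\ bab=a^{2n-1}\rangle$ is the semi-dihedral group of order $8n$ (exponents of $a$ modulo $4n$); $\mathbb{F}(SD_{8n})$ is its group algebra. For $\beta$ in the group algebra, the inner derivation $d_\beta$ is $d_\beta(\alpha)=\alpha\beta-\beta\alpha$; $\mathrm{Der}_{\mathrm{inn}}(\mathbb{F}(SD_{8n}))=\{d_\beta\}$, an $\mathbb{F}$-vector space. *)

theory Defs
  imports Complex_Main "HOL-Library.Function_Algebras"
begin

text \<open>The semi-dihedral group SD_{8n}: the element a^i b^e (0 <= i < 4n, e in {0,1})
  is encoded as the pair (i, e).  Since b a^j = a^{j(2n-1)} b, the product is
  a^i b^e * a^j b^f = a^{i + j (2n-1)^e} b^{e+f}.\<close>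

definition sd_carrier :: "nat \<Rightarrow> (nat \<times> nat) set" where
  "sd_carrier n = {(i, e). i < 4 * n \<and> e < 2}"

definition sd_mult :: "nat \<Rightarrow> nat \<times> nat \<Rightarrow> nat \<times> nat \<Rightarrow> nat \<times> nat" where
  "sd_mult n x y = ((fst x + fst y * (2 * n - 1) ^ snd x) mod (4 * n),
                    (snd x + snd y) mod 2)"

definition sd_a :: "nat \<Rightarrow> int \<Rightarrow> nat \<times> nat" where
  "sd_a n k = (nat (k mod (4 * int n)), 0)"

definition sd_ab :: "nat \<Rightarrow> int \<Rightarrow> nat \<times> nat" where
  "sd_ab n k = (nat (k mod (4 * int n)), 1)"

definition grp_alg :: "nat \<Rightarrow> (nat \<times> nat \<Rightarrow> 'a::field) set" where
  "grp_alg n = {\<alpha>. \<forall>g. g \<notin> sd_carrier n \<longrightarrow> \<alpha> g = 0}"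

definition ga_mult :: "nat \<Rightarrow> (nat \<times> nat \<Rightarrow> 'a::field) \<Rightarrow> (nat \<times> nat \<Rightarrow> 'a) \<Rightarrow> (nat \<times> nat \<Rightarrow> 'a)" where
  "ga_mult n \<alpha> \<beta> = (\<lambda>g. if g \<in> sd_carrier n then
      (\<Sum>h\<in>sd_carrier n. \<Sum>k\<in>sd_carrier n. if sd_mult n h k = g then \<alpha> h * \<beta> k else 0)
    else 0)"

definition ga_elem :: "nat \<times> nat \<Rightarrow> (nat \<times> nat \<Rightarrow> 'a::field)" where
  "ga_elem g = (\<lambda>h. if h = g then 1 else 0)"

definition inn_der :: "nat \<Rightarrow> (nat \<times> nat \<Rightarrow> 'a::field) \<Rightarrow> (nat \<times> nat \<Rightarrow> 'a) \<Rightarrow> (nat \<times> nat \<Rightarrow> 'a)" where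
  "inn_der n \<beta> = (\<lambda>\<alpha>. ga_mult n \<alpha> \<beta> - ga_mult n \<beta> \<alpha>)"

definition Der_inn :: "nat \<Rightarrow> ((nat \<times> nat \<Rightarrow> 'a::field) \<Rightarrow> (nat \<times> nat \<Rightarrow> 'a)) set" where
  "Der_inn n = inn_der n ` grp_alg n"

definition der_scale :: "'a::field \<Rightarrow> ((nat \<times> nat \<Rightarrow> 'a) \<Rightarrow> (nat \<times> nat \<Rightarrow> 'a)) \<Rightarrow> ((nat \<times> nat \<Rightarrow> 'a) \<Rightarrow> (nat \<times> nat \<Rightarrow> 'a))" where
  "der_scale c D = (\<lambda>\<alpha> g. c * D \<alpha> g)"

definition basis_even :: "nat \<Rightarrow> (nat \<times> nat) set" where
  "basis_even n =
     {sd_a n (2 * k) | k. 1 \<le> k \<and> k \<le> int n - 1}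
   \<union> {sd_a n (2 * k + 1) | k. - (int n div 2) \<le> k \<and> k \<le> int n div 2 - 1}
   \<union> {sd_ab n (2 * k) | k. 1 \<le> k \<and> k \<le> 2 * int n - 1}
   \<union> {sd_ab n (2 * k - 1) | k. 1 \<le> k \<and> k \<le> 2 * int n - 1}"

definition basis_odd :: "nat \<Rightarrow> (nat \<times> nat) set" where
  "basis_odd n =
     {sd_a n (2 * k) | k. 1 \<le> k \<and> k \<le> int n - 1}
   \<union> {sd_a n (2 * k + 1) | k. - ((int n - 1) div 2) \<le> k \<and> k \<le> (int n - 1) div 2 - 1}
   \<union> {sd_ab n (4 * k + j) | k j. 1 \<le> k \<and> k \<le> int n - 1 \<and> j \<in> {0, 1, 2, 3}}"

end

theory Submission
  imports Defs "HOL-Number_Theory.Cong"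
begin

text \<open>
  The map \<open>\<beta> \<mapsto> d_\<beta>\<close> is linear, and \<open>d_\<beta> = 0\<close> exactly when \<open>\<beta>\<close> is central, i.e. constant
  on conjugacy classes. Hence if \<open>B\<close> omits exactly one element of every conjugacy class, the
  \<open>d_g\<close> with \<open>g \<in> B\<close> form a basis of the inner derivations: a central element supported
  on \<open>B\<close> vanishes, because each class has a point outside \<open>B\<close>; and for \<open>t \<notin> B\<close> the class
  sum of \<open>t\<close> is central, so \<open>d_t\<close> is minus the sum of the \<open>d_s\<close> over the rest of its class,
  which lies in \<open>B\<close>. The conjugacy classes of \<open>SD_8n\<close> are the pairs \<open>{a^i, a^(i(2n-1))}\<close>
  and, among the elements \<open>a^i b\<close>, the residue classes of \<open>i\<close> modulo 2 (\<open>n\<close> even) or 4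
  (\<open>n\<close> odd). The index sets of the theorem omit exactly one element of each class; counting
  them gives the dimension.
\<close>

section \<open>Inner derivations depend linearly on the defining element\<close>

lemma finite_sd_carrier: "finite (sd_carrier n)"
  by (rule finite_subset[of _ "{..<4 * n} \<times> {..<2}"]) (auto simp: sd_carrier_def)

lemma vector_space_der_scale:
  "vector_space (der_scale :: 'a::field \<Rightarrow> ((nat \<times> nat \<Rightarrow> 'a) \<Rightarrow> (nat \<times> nat \<Rightarrow> 'a)) \<Rightarrow> _)"
  by unfold_locales (auto simp: der_scale_def fun_eq_iff algebra_simps)

lemma sum_apply: "sum F S x = (\<Sum>i\<in>S. F i x)"
  by (induction S rule: infinite_finite_induct) auto

lemma eq_if_add_mod_2_eq:
  fixes e f f' :: nat
  assumes "(e + f) mod 2 = (e + f') mod 2" "f < 2" "f' < 2"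
  shows "f = f'"
proof -
  have "[e + f = e + f'] (mod 2)"
    using assms(1) unfolding cong_def .
  then have "[f = f'] (mod 2)"
    by (simp only: cong_add_lcancel_nat)
  then show ?thesis
    using assms(2,3) by (rule cong_less_modulus_unique_nat)
qed

abbreviation inn_der_elem :: "nat \<Rightarrow> nat \<times> nat \<Rightarrow> (nat \<times> nat \<Rightarrow> 'a::field) \<Rightarrow> (nat \<times> nat \<Rightarrow> 'a)"
  where "inn_der_elem n g \<equiv> inn_der n (ga_elem g)"

lemma ga_mult_elem_right_apply:
  assumes "g \<in> sd_carrier n"
  shows "ga_mult n \<alpha> (ga_elem g) x =
    (if x \<in> sd_carrier n then \<Sum>h\<in>sd_carrier n. if sd_mult n h g = x then \<alpha> h else 0 else 0)"
proof -
  have "(\<Sum>k\<in>sd_carrier n. if sd_mult n h k = x then \<alpha> h * ga_elem g k else 0)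
      = (\<Sum>k\<in>sd_carrier n. if k = g then (if sd_mult n h g = x then \<alpha> h else 0) else 0)" for h
    by (intro sum.cong) (auto simp: ga_elem_def)
  then show ?thesis using assms finite_sd_carrier by (simp add: ga_mult_def)
qed

lemma ga_mult_elem_left_apply:
  assumes "g \<in> sd_carrier n"
  shows "ga_mult n (ga_elem g) \<alpha> x =
    (if x \<in> sd_carrier n then \<Sum>k\<in>sd_carrier n. if sd_mult n g k = x then \<alpha> k else 0 else 0)"
proof -
  have "(\<Sum>k\<in>sd_carrier n. if sd_mult n h k = x then ga_elem g h * \<alpha> k else 0)
      = (if h = g then \<Sum>k\<in>sd_carrier n. if sd_mult n g k = x then \<alpha> k else 0 else 0)" for h
    by (simp add: ga_elem_def cong: if_cong)
  then show ?thesis using assms finite_sd_carrier by (simp add: ga_mult_def)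
qed

lemma sum_ga_mult_elem_right: "(\<Sum>g\<in>sd_carrier n. c g * ga_mult n \<alpha> (ga_elem g) x) = ga_mult n \<alpha> c x"
proof (cases "x \<in> sd_carrier n")
  case True
  have "(\<Sum>g\<in>sd_carrier n. c g * ga_mult n \<alpha> (ga_elem g) x)
      = (\<Sum>g\<in>sd_carrier n. \<Sum>h\<in>sd_carrier n. if sd_mult n h g = x then \<alpha> h * c g else 0)"
  proof (rule sum.cong[OF refl])
    fix g assume "g \<in> sd_carrier n"
    then show "c g * ga_mult n \<alpha> (ga_elem g) x
        = (\<Sum>h\<in>sd_carrier n. if sd_mult n h g = x then \<alpha> h * c g else 0)"
      using True by (auto simp: ga_mult_elem_right_apply mult.commute[of "c g"] sum_distrib_right intro!: sum.cong)
  qed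
  also have "\<dots> = ga_mult n \<alpha> c x"
    using True by (subst sum.swap) (simp add: ga_mult_def)
  finally show ?thesis .
qed (simp add: ga_mult_def)

lemma sum_ga_mult_elem_left: "(\<Sum>g\<in>sd_carrier n. c g * ga_mult n (ga_elem g) \<alpha> x) = ga_mult n c \<alpha> x"
proof (cases "x \<in> sd_carrier n")
  case True
  have "(\<Sum>g\<in>sd_carrier n. c g * ga_mult n (ga_elem g) \<alpha> x)
      = (\<Sum>g\<in>sd_carrier n. \<Sum>k\<in>sd_carrier n. if sd_mult n g k = x then c g * \<alpha> k else 0)"
    using True by (intro sum.cong) (auto simp: ga_mult_elem_left_apply sum_distrib_left intro!: sum.cong)
  also have "\<dots> = ga_mult n c \<alpha> x"
    using True by (simp add: ga_mult_def)
  finally show ?thesis .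
qed (simp add: ga_mult_def)

lemma inn_der_eq_sum: "inn_der n \<beta> = (\<Sum>g\<in>sd_carrier n. der_scale (\<beta> g) (inn_der_elem n g))"
proof (intro ext)
  fix \<alpha> x
  have "(\<Sum>g\<in>sd_carrier n. der_scale (\<beta> g) (inn_der_elem n g)) \<alpha> x
      = (\<Sum>g\<in>sd_carrier n. \<beta> g * ga_mult n \<alpha> (ga_elem g) x)
      - (\<Sum>g\<in>sd_carrier n. \<beta> g * ga_mult n (ga_elem g) \<alpha> x)"
    by (simp add: sum_apply der_scale_def inn_der_def right_diff_distrib sum_subtractf)
  then show "inn_der n \<beta> \<alpha> x = (\<Sum>g\<in>sd_carrier n. der_scale (\<beta> g) (inn_der_elem n g)) \<alpha> x"
    by (simp add: sum_ga_mult_elem_right sum_ga_mult_elem_left inn_der_def)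
qed

lemma inn_der_add: "inn_der n (\<beta> + \<gamma>) = inn_der n \<beta> + inn_der n \<gamma>"
  by (subst (1 2 3) inn_der_eq_sum)
    (simp add: fun_eq_iff sum_apply der_scale_def distrib_right sum.distrib)

lemma inn_der_scale: "der_scale c (inn_der n \<beta>) = inn_der n (\<lambda>x. c * \<beta> x)"
  by (subst (1 2) inn_der_eq_sum)
    (simp add: fun_eq_iff sum_apply der_scale_def sum_distrib_left mult.assoc)

lemma inn_der_zero: "inn_der n 0 = 0"
  by (simp add: fun_eq_iff inn_der_def ga_mult_def cong: if_cong)

lemma sum_inn_der_elem:
  assumes "S \<subseteq> sd_carrier n"
  shows "(\<Sum>g\<in>S. der_scale (u g) (inn_der_elem n g)) = inn_der n (\<lambda>x. if x \<in> S then u x else 0)"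
proof -
  have "inn_der n (\<lambda>x. if x \<in> S then u x else 0)
      = (\<Sum>g\<in>sd_carrier n. if g \<in> S then der_scale (u g) (inn_der_elem n g) else 0)"
    by (subst inn_der_eq_sum) (intro sum.cong refl, simp add: der_scale_def zero_fun_def)
  also have "\<dots> = (\<Sum>g\<in>S. der_scale (u g) (inn_der_elem n g))"
    using assms finite_sd_carrier by (simp add: sum.If_cases Int_absorb1)
  finally show ?thesis ..
qed

lemma Der_inn_eq_span: "Der_inn n = module.span der_scale (inn_der_elem n ` sd_carrier n)"
proof -
  interpret V: vector_space "der_scale :: 'a::field \<Rightarrow> ((nat \<times> nat \<Rightarrow> 'a) \<Rightarrow> (nat \<times> nat \<Rightarrow> 'a)) \<Rightarrow> _"
    by (rule vector_space_der_scale)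
  have "V.subspace (Der_inn n :: (_ \<Rightarrow> (nat \<times> nat \<Rightarrow> 'a)) set)"
  proof (rule V.subspaceI)
    show "0 \<in> Der_inn n"
      using inn_der_zero by (force simp: Der_inn_def grp_alg_def)
    show "D + D' \<in> Der_inn n" if "D \<in> Der_inn n" "D' \<in> Der_inn n" for D D'
      using that by (force simp: Der_inn_def grp_alg_def inn_der_add[symmetric])
    show "der_scale c D \<in> Der_inn n" if "D \<in> Der_inn n" for c D
      using that by (force simp: Der_inn_def grp_alg_def inn_der_scale)
  qed
  moreover have "inn_der_elem n ` sd_carrier n \<subseteq> (Der_inn n :: (_ \<Rightarrow> (nat \<times> nat \<Rightarrow> 'a)) set)"
    by (auto simp: Der_inn_def grp_alg_def ga_elem_def)
  ultimately have "V.span (inn_der_elem n ` sd_carrier n) \<subseteq> Der_inn n"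
    by (rule V.span_minimal[rotated])
  moreover have "inn_der n \<beta> \<in> V.span (inn_der_elem n ` sd_carrier n)" for \<beta> :: "nat \<times> nat \<Rightarrow> 'a"
    by (subst inn_der_eq_sum) (intro V.span_sum V.span_scale V.span_base imageI)
  then have "Der_inn n \<subseteq> V.span (inn_der_elem n ` sd_carrier n)"
    by (auto simp: Der_inn_def)
  ultimately show ?thesis by blast
qed

section \<open>A basis criterion\<close>

lemma coeff_eq_0_if_sum_inn_der_elem_eq_0:
  fixes u :: "nat \<times> nat \<Rightarrow> 'a::field"
  assumes B: "B \<subseteq> sd_carrier n"
    and central_zero: "\<And>\<beta> :: nat \<times> nat \<Rightarrow> 'a.
      inn_der n \<beta> = 0 \<Longrightarrow> (\<And>x. x \<notin> B \<Longrightarrow> \<beta> x = 0) \<Longrightarrow> \<beta> = 0"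
    and S: "S \<subseteq> B" "(\<Sum>g\<in>S. der_scale (u g) (inn_der_elem n g)) = 0" and g: "g \<in> S"
  shows "u g = 0"
proof -
  have "inn_der n (\<lambda>x. if x \<in> S then u x else 0) = 0"
    using sum_inn_der_elem[of S n u] S B by simp
  then have "(\<lambda>x. if x \<in> S then u x else 0) = 0"
    using S(1) by (intro central_zero) auto
  from fun_cong[OF this, of g] show ?thesis using g by simp
qed

lemma inn_der_elem_independent:
  fixes B :: "(nat \<times> nat) set"
  assumes B: "B \<subseteq> sd_carrier n"
    and central_zero: "\<And>\<beta> :: nat \<times> nat \<Rightarrow> 'a::field.
      inn_der n \<beta> = 0 \<Longrightarrow> (\<And>x. x \<notin> B \<Longrightarrow> \<beta> x = 0) \<Longrightarrow> \<beta> = 0"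
  shows "inj_on (inn_der_elem n :: _ \<Rightarrow> (_ \<Rightarrow> (nat \<times> nat \<Rightarrow> 'a))) B
    \<and> \<not> module.dependent der_scale (inn_der_elem n ` B :: (_ \<Rightarrow> (nat \<times> nat \<Rightarrow> 'a)) set)"
proof -
  interpret V: vector_space "der_scale :: 'a \<Rightarrow> ((nat \<times> nat \<Rightarrow> 'a) \<Rightarrow> (nat \<times> nat \<Rightarrow> 'a)) \<Rightarrow> _"
    by (rule vector_space_der_scale)
  let ?D = "inn_der_elem n :: _ \<Rightarrow> (_ \<Rightarrow> (nat \<times> nat \<Rightarrow> 'a))"
  note coeffs_zero = coeff_eq_0_if_sum_inn_der_elem_eq_0[OF B central_zero]
  have inj: "inj_on ?D B"
  proof (rule inj_onI, rule ccontr)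
    fix g h assume g: "g \<in> B" and h: "h \<in> B" and eq: "?D g = ?D h" and "g \<noteq> h"
    then have "(\<Sum>x\<in>{g, h}. der_scale (if x = g then 1 else - 1) (?D x)) = 0"
      by (simp add: der_scale_def fun_eq_iff)
    then have "(if g = g then 1 else - 1 :: 'a) = 0"
      using g h by (intro coeffs_zero[where S = "{g, h}" and u = "\<lambda>x. if x = g then 1 else - 1"]) auto
    then show False by simp
  qed
  have finite_B: "finite B"
    using B finite_sd_carrier finite_subset by blast
  have indep: "\<not> V.dependent (?D ` B)"
  proof
    assume "V.dependent (?D ` B)"
    then obtain u where u: "\<exists>v\<in>?D ` B. u v \<noteq> 0" "(\<Sum>v\<in>?D ` B. der_scale (u v) v) = 0"
      using finite_B by (auto simp: V.dependent_finite)
    have "(\<Sum>g\<in>B. der_scale (u (?D g)) (?D g)) = 0"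
      using u(2) by (simp add: sum.reindex[OF inj])
    then have "u (?D g) = 0" if "g \<in> B" for g
      using that by (intro coeffs_zero[where S = B and u = "\<lambda>g. u (?D g)"]) auto
    with u(1) show False by blast
  qed
  with inj show ?thesis ..
qed

lemma span_inn_der_elem_eq_Der_inn:
  assumes B: "B \<subseteq> sd_carrier n"
    and spanning: "\<And>t. t \<in> sd_carrier n \<Longrightarrow> t \<notin> B \<Longrightarrow>
      inn_der_elem n t \<in> module.span der_scale (inn_der_elem n ` B :: (_ \<Rightarrow> (nat \<times> nat \<Rightarrow> 'a::field)) set)"
  shows "module.span der_scale (inn_der_elem n ` B :: (_ \<Rightarrow> (nat \<times> nat \<Rightarrow> 'a)) set) = Der_inn n"
proof -
  interpret V: vector_space "der_scale :: 'a \<Rightarrow> ((nat \<times> nat \<Rightarrow> 'a) \<Rightarrow> (nat \<times> nat \<Rightarrow> 'a)) \<Rightarrow> _"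
    by (rule vector_space_der_scale)
  let ?D = "inn_der_elem n :: _ \<Rightarrow> (_ \<Rightarrow> (nat \<times> nat \<Rightarrow> 'a))"
  have "?D ` sd_carrier n \<subseteq> V.span (?D ` B)"
    using spanning by (auto intro: V.span_base)
  then have "V.span (?D ` sd_carrier n) \<subseteq> V.span (?D ` B)"
    by (rule V.span_minimal) (rule V.subspace_span)
  moreover have "V.span (?D ` B) \<subseteq> V.span (?D ` sd_carrier n)"
    using B by (intro V.span_mono) auto
  ultimately show "V.span (?D ` B) = Der_inn n"
    by (simp add: Der_inn_eq_span)
qed

lemma inn_der_elem_basis:
  fixes B :: "(nat \<times> nat) set"
  assumes B: "B \<subseteq> sd_carrier n"
    and central_zero: "\<And>\<beta> :: nat \<times> nat \<Rightarrow> 'a::field. inn_der n \<beta> = 0 \<Longrightarrow> (\<And>x. x \<notin> B \<Longrightarrow> \<beta> x = 0) \<Longrightarrow> \<beta> = 0"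
    and spanning: "\<And>t. t \<in> sd_carrier n \<Longrightarrow> t \<notin> B \<Longrightarrow>
      inn_der_elem n t \<in> module.span der_scale (inn_der_elem n ` B :: (_ \<Rightarrow> (nat \<times> nat \<Rightarrow> 'a)) set)"
  shows "\<not> module.dependent der_scale (inn_der_elem n ` B :: (_ \<Rightarrow> (nat \<times> nat \<Rightarrow> 'a)) set)
    \<and> module.span der_scale (inn_der_elem n ` B :: (_ \<Rightarrow> (nat \<times> nat \<Rightarrow> 'a)) set) = Der_inn n
    \<and> vector_space.dim der_scale (Der_inn n :: (_ \<Rightarrow> (nat \<times> nat \<Rightarrow> 'a)) set) = card B"
proof -
  interpret V: vector_space "der_scale :: 'a \<Rightarrow> ((nat \<times> nat \<Rightarrow> 'a) \<Rightarrow> (nat \<times> nat \<Rightarrow> 'a)) \<Rightarrow> _"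
    by (rule vector_space_der_scale)
  let ?D = "inn_der_elem n :: _ \<Rightarrow> (_ \<Rightarrow> (nat \<times> nat \<Rightarrow> 'a))"
  have inj: "inj_on ?D B" and indep: "\<not> V.dependent (?D ` B)"
    using inn_der_elem_independent[OF B central_zero] by blast+
  have span: "V.span (?D ` B) = Der_inn n"
    by (rule span_inn_der_elem_eq_Der_inn[OF B spanning])
  have "V.dim (Der_inn n) = card (?D ` B)"
    using indep by (simp flip: span add: V.dim_eq_card_independent)
  with inj indep span show ?thesis
    by (simp add: card_image)
qed

section \<open>Conjugacy classes\<close>

definition sd_conj_closed :: "nat \<Rightarrow> (nat \<times> nat) set \<Rightarrow> bool" where
  "sd_conj_closed n S \<longleftrightarrow> (\<forall>a\<in>sd_carrier n. \<forall>b\<in>sd_carrier n. \<forall>c\<in>sd_carrier n.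
     sd_mult n a b = sd_mult n c a \<longrightarrow> (b \<in> S \<longleftrightarrow> c \<in> S))"

definition sd_refl_modulus :: "nat \<Rightarrow> nat" where
  "sd_refl_modulus n = (if even n then 2 else 4)"

text \<open>\<open>b a^i b = a^(i(2n-1))\<close>, and conjugating \<open>a^i b\<close> by \<open>a^j\<close> gives \<open>a^(i+2j(1-n)) b\<close>,
  where \<open>gcd (2(1-n)) (4n) = sd_refl_modulus n\<close>.\<close>
definition sd_class :: "nat \<Rightarrow> nat \<times> nat \<Rightarrow> (nat \<times> nat) set" where
  "sd_class n x = (if snd x = 0 then {x, (fst x * (2 * n - 1) mod (4 * n), 0)}
     else {y \<in> sd_carrier n. snd y = 1 \<and> fst y mod sd_refl_modulus n = fst x mod sd_refl_modulus n})"

definition sd_refl_rep :: "nat \<Rightarrow> nat \<Rightarrow> nat" where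
  "sd_refl_rep n i = (if odd n then i mod 4 else if even i then 0 else 4 * n - 1)"

text \<open>The index sets \<open>basis_even\<close> and \<open>basis_odd\<close> in normal form. Of each pair
  \<open>{a^i, a^(i(2n-1))}\<close> it keeps the exponent on one side of the centre of the reflection
  \<open>i \<mapsto> i(2n-1) mod 4n\<close> (\<open>0\<close> and \<open>2n\<close> for even \<open>i\<close>, \<open>n\<close> and \<open>3n\<close> for odd \<open>i\<close>), and of each class
  of elements \<open>a^i b\<close> all but \<open>a^r b\<close> with \<open>r = sd_refl_rep n i\<close>.\<close>
definition sd_basis :: "nat \<Rightarrow> (nat \<times> nat) set" where
  "sd_basis n =
     {(i, 0) | i. i < 4 * n \<and> (if even i then 0 < i \<and> i < 2 * n else i < n \<or> 3 * n < i)}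
   \<union> {(i, 1) | i. if even n then 0 < i \<and> i + 1 < 4 * n else 4 \<le> i \<and> i < 4 * n}"

context
  fixes n :: nat
  assumes n_pos: "1 \<le> n"
begin

lemma sd_unit_square_cong: "[(2 * n - 1) * (2 * n - 1) = 1] (mod (4 * n))"
proof -
  obtain m where "n = Suc m" using n_pos by (cases n) auto
  then have "(2 * n - 1) * (2 * n - 1) = 1 + m * (4 * n)" by (simp add: algebra_simps)
  then have "(2 * n - 1) * (2 * n - 1) mod (4 * n) = (1 + m * (4 * n)) mod (4 * n)" by simp
  also have "\<dots> = 1 mod (4 * n)" by (rule mod_mult_self1)
  finally show ?thesis unfolding cong_def .
qed

lemma coprime_sd_unit: "coprime (2 * n - 1) (4 * n)"
  using cong_imp_coprime[OF cong_sym[OF sd_unit_square_cong]] by simp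

lemma sd_mult_closed: "sd_mult n x y \<in> sd_carrier n"
  using n_pos by (simp add: sd_mult_def sd_carrier_def)

lemma sd_mult_left_cancel:
  assumes "y \<in> sd_carrier n" "y' \<in> sd_carrier n" "sd_mult n x y = sd_mult n x y'"
  shows "y = y'"
proof -
  obtain i e j f j' f' where xy: "x = (i, e)" "y = (j, f)" "y' = (j', f')"
    by (cases x, cases y, cases y') auto
  have "(e + f) mod 2 = (e + f') mod 2"
    using assms(3) by (simp add: sd_mult_def xy)
  then have "f = f'"
    by (rule eq_if_add_mod_2_eq) (use assms(1,2) in \<open>simp_all add: xy sd_carrier_def\<close>)
  have "[i + j * (2 * n - 1) ^ e = i + j' * (2 * n - 1) ^ e] (mod (4 * n))"
    using assms(3) by (simp add: sd_mult_def xy cong_def)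
  moreover have "coprime ((2 * n - 1) ^ e) (4 * n)"
    using coprime_sd_unit by simp
  ultimately have "[j = j'] (mod (4 * n))"
    by (simp add: cong_add_lcancel_nat cong_mult_rcancel_nat)
  with \<open>f = f'\<close> show ?thesis
    using assms(1,2) by (auto simp: xy sd_carrier_def intro: cong_less_modulus_unique_nat)
qed

lemma sd_mult_right_cancel:
  assumes "x \<in> sd_carrier n" "x' \<in> sd_carrier n" "sd_mult n x y = sd_mult n x' y"
  shows "x = x'"
proof -
  obtain i e i' e' j f where xy: "x = (i, e)" "x' = (i', e')" "y = (j, f)"
    by (cases x, cases x', cases y) auto
  have "(e + f) mod 2 = (e' + f) mod 2"
    using assms(3) by (simp add: sd_mult_def xy)
  then have "(f + e) mod 2 = (f + e') mod 2"
    by (simp add: add.commute)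
  then have "e = e'"
    by (rule eq_if_add_mod_2_eq) (use assms(1,2) in \<open>simp_all add: xy sd_carrier_def\<close>)
  then have "[i = i'] (mod (4 * n))"
    using assms(3) by (simp add: sd_mult_def xy cong_def[symmetric] cong_add_rcancel_nat)
  with \<open>e = e'\<close> show ?thesis
    using assms(1,2) by (auto simp: xy sd_carrier_def intro: cong_less_modulus_unique_nat)
qed

lemma bij_betw_sd_mult_left: "x \<in> sd_carrier n \<Longrightarrow> bij_betw (sd_mult n x) (sd_carrier n) (sd_carrier n)"
  by (intro bij_betw_imageI endo_inj_surj finite_sd_carrier)
    (auto intro: inj_onI sd_mult_left_cancel sd_mult_closed)

lemma bij_betw_sd_mult_right: "x \<in> sd_carrier n \<Longrightarrow> bij_betw (\<lambda>y. sd_mult n y x) (sd_carrier n) (sd_carrier n)"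
  by (intro bij_betw_imageI endo_inj_surj finite_sd_carrier)
    (auto intro: inj_onI sd_mult_right_cancel sd_mult_closed)

lemma sum_if_sd_mult_left:
  assumes "y \<in> sd_carrier n"
  shows "(\<Sum>k\<in>sd_carrier n. if sd_mult n x k = sd_mult n x y then f k else 0) = f y"
proof -
  have "(\<Sum>k\<in>sd_carrier n. if sd_mult n x k = sd_mult n x y then f k else 0)
      = (\<Sum>k\<in>sd_carrier n. if k = y then f k else 0)"
    using assms by (intro sum.cong refl) (auto dest: sd_mult_left_cancel)
  then show ?thesis using assms finite_sd_carrier by simp
qed

lemma sum_if_sd_mult_right:
  assumes "y \<in> sd_carrier n"
  shows "(\<Sum>k\<in>sd_carrier n. if sd_mult n k x = sd_mult n y x then f k else 0) = f y"
proof -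
  have "(\<Sum>k\<in>sd_carrier n. if sd_mult n k x = sd_mult n y x then f k else 0)
      = (\<Sum>k\<in>sd_carrier n. if k = y then f k else 0)"
    using assms by (intro sum.cong refl) (auto dest: sd_mult_right_cancel)
  then show ?thesis using assms finite_sd_carrier by simp
qed

lemma ga_mult_elem_left_translate:
  "x \<in> sd_carrier n \<Longrightarrow> y \<in> sd_carrier n \<Longrightarrow> ga_mult n (ga_elem x) \<beta> (sd_mult n x y) = \<beta> y"
  by (simp add: ga_mult_elem_left_apply sd_mult_closed sum_if_sd_mult_left)

lemma ga_mult_elem_right_translate:
  "x \<in> sd_carrier n \<Longrightarrow> y \<in> sd_carrier n \<Longrightarrow> ga_mult n \<beta> (ga_elem x) (sd_mult n y x) = \<beta> y"
  by (simp add: ga_mult_elem_right_apply sd_mult_closed sum_if_sd_mult_right)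

lemma inn_der_eq_0_imp_conj_eq:
  assumes "inn_der n \<beta> = 0" "h \<in> sd_carrier n" "y \<in> sd_carrier n" "y' \<in> sd_carrier n"
    and "sd_mult n y' h = sd_mult n h y"
  shows "\<beta> y' = \<beta> y"
proof -
  have "ga_mult n (ga_elem h) \<beta> = ga_mult n \<beta> (ga_elem h)"
    using fun_cong[OF assms(1), of "ga_elem h"] by (simp add: inn_der_def)
  then have "ga_mult n \<beta> (ga_elem h) (sd_mult n y' h) = ga_mult n (ga_elem h) \<beta> (sd_mult n h y)"
    by (simp add: assms(5))
  then show ?thesis
    using assms(2-4) by (simp add: ga_mult_elem_left_translate ga_mult_elem_right_translate)
qed

lemma ga_mult_indicator_commute:
  fixes \<alpha> :: "nat \<times> nat \<Rightarrow> 'a::field"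
  assumes S: "sd_conj_closed n S"
  defines "z \<equiv> \<lambda>x. if x \<in> S then 1 else 0"
  shows "ga_mult n \<alpha> z = ga_mult n z \<alpha>"
proof
  fix x
  show "ga_mult n \<alpha> z x = ga_mult n z \<alpha> x"
  proof (cases "x \<in> sd_carrier n")
    case True
    have "(\<Sum>k\<in>sd_carrier n. if sd_mult n h k = x then \<alpha> h * z k else 0)
        = (\<Sum>k\<in>sd_carrier n. if sd_mult n k h = x then z k * \<alpha> h else 0)"
      if h: "h \<in> sd_carrier n" for h
    proof -
      have "x \<in> sd_mult n h ` sd_carrier n" "x \<in> (\<lambda>k. sd_mult n k h) ` sd_carrier n"
        using True bij_betw_sd_mult_left[OF h] bij_betw_sd_mult_right[OF h]
        by (simp_all add: bij_betw_def)
      then obtain k k' where k: "k \<in> sd_carrier n" "x = sd_mult n h k"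
        and k': "k' \<in> sd_carrier n" "x = sd_mult n k' h"
        by blast
      have "z k = z k'"
        using S h k k' unfolding sd_conj_closed_def z_def by metis
      moreover have "(\<Sum>k''\<in>sd_carrier n. if sd_mult n h k'' = x then \<alpha> h * z k'' else 0) = \<alpha> h * z k"
        using sum_if_sd_mult_left[OF k(1), of h "\<lambda>k. \<alpha> h * z k"] k(2) by simp
      moreover have "(\<Sum>k''\<in>sd_carrier n. if sd_mult n k'' h = x then z k'' * \<alpha> h else 0) = z k' * \<alpha> h"
        using sum_if_sd_mult_right[OF k'(1), of h "\<lambda>k. z k * \<alpha> h"] k'(2) by simp
      ultimately show ?thesis by (simp add: mult.commute)
    qed
    then have "ga_mult n \<alpha> z x
        = (\<Sum>h\<in>sd_carrier n. \<Sum>k\<in>sd_carrier n. if sd_mult n k h = x then z k * \<alpha> h else 0)"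
      using True by (simp add: ga_mult_def)
    also have "\<dots> = ga_mult n z \<alpha> x"
      using True by (subst sum.swap) (simp add: ga_mult_def)
    finally show ?thesis .
  qed (simp add: ga_mult_def)
qed

lemma sum_inn_der_elem_conj_closed:
  assumes S: "S \<subseteq> sd_carrier n" "sd_conj_closed n S"
  shows "(\<Sum>s\<in>S. inn_der_elem n s :: (nat \<times> nat \<Rightarrow> 'a::field) \<Rightarrow> _) = 0"
proof -
  have "(\<Sum>s\<in>S. inn_der_elem n s) = inn_der n (\<lambda>x. if x \<in> S then 1 else 0 :: 'a)"
    using sum_inn_der_elem[OF S(1), of "\<lambda>_. 1 :: 'a"] by (simp add: der_scale_def)
  also have "\<dots> = 0"
    using ga_mult_indicator_commute[OF S(2), where 'a = 'a] by (simp add: fun_eq_iff inn_der_def)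
  finally show ?thesis .
qed

lemma sd_refl_modulus_dvd: "sd_refl_modulus n dvd 4 * n"
  by (auto simp: sd_refl_modulus_def elim: evenE)

lemma sd_unit_cong_1_mod_refl_modulus: "[2 * n - 1 = 1] (mod sd_refl_modulus n)"
  using n_pos by (cases n) (auto simp: sd_refl_modulus_def cong_def elim!: oddE)

lemma sd_unit_involution: "y < 4 * n \<Longrightarrow> (y * (2 * n - 1) mod (4 * n)) * (2 * n - 1) mod (4 * n) = y"
  using cong_scalar_left[OF sd_unit_square_cong, of y]
  by (simp add: cong_def mod_mult_left_eq mult.assoc)

lemma sd_conj_snd:
  assumes "a \<in> sd_carrier n" "b \<in> sd_carrier n" "c \<in> sd_carrier n" "sd_mult n a b = sd_mult n c a"
  shows "snd c = snd b"
proof -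
  have "(snd a + snd c) mod 2 = (snd a + snd b) mod 2"
    using assms(4) by (simp add: sd_mult_def add.commute)
  then show ?thesis
    by (rule eq_if_add_mod_2_eq) (use assms(1-3) in \<open>auto simp: sd_carrier_def\<close>)
qed

lemma sd_conj_rotation:
  assumes "a \<in> sd_carrier n" "b \<in> sd_carrier n" "c \<in> sd_carrier n" "sd_mult n a b = sd_mult n c a"
    and "snd b = 0"
  shows "fst c = fst b * (2 * n - 1) ^ snd a mod (4 * n)"
proof -
  have "[fst b * (2 * n - 1) ^ snd a + fst a = fst c + fst a] (mod (4 * n))"
    using assms sd_conj_snd[OF assms(1-4)] by (simp add: sd_mult_def cong_def add.commute)
  then have "[fst b * (2 * n - 1) ^ snd a = fst c] (mod (4 * n))"
    by (simp add: cong_add_rcancel_nat)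
  then show ?thesis
    using assms(3) by (auto simp: cong_def sd_carrier_def)
qed

lemma sd_mult_fst_mod_refl_modulus:
  "fst (sd_mult n x y) mod sd_refl_modulus n = (fst x + fst y) mod sd_refl_modulus n"
proof -
  have "[(2 * n - 1) ^ snd x = 1 ^ snd x] (mod sd_refl_modulus n)"
    by (rule cong_pow[OF sd_unit_cong_1_mod_refl_modulus])
  then have "[fst x + fst y * (2 * n - 1) ^ snd x = fst x + fst y * 1] (mod sd_refl_modulus n)"
    by (intro cong_add cong_mult cong_refl) simp
  then show ?thesis
    using sd_refl_modulus_dvd by (simp add: sd_mult_def cong_def mod_mod_cancel)
qed

lemma sd_conj_reflection:
  assumes "sd_mult n a b = sd_mult n c a"
  shows "fst c mod sd_refl_modulus n = fst b mod sd_refl_modulus n"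
proof -
  have "[fst a + fst b = fst a + fst c] (mod sd_refl_modulus n)"
    using arg_cong[OF assms, of "\<lambda>x. fst x mod sd_refl_modulus n"]
    by (simp add: sd_mult_fst_mod_refl_modulus cong_def add.commute)
  then have "[fst b = fst c] (mod sd_refl_modulus n)"
    by (simp only: cong_add_lcancel_nat)
  then show ?thesis
    by (simp add: cong_def)
qed

lemma sd_class_subset: "x \<in> sd_carrier n \<Longrightarrow> sd_class n x \<subseteq> sd_carrier n"
  using n_pos by (auto simp: sd_class_def sd_carrier_def)

lemma self_in_sd_class: "x \<in> sd_carrier n \<Longrightarrow> x \<in> sd_class n x"
  by (auto simp: sd_class_def sd_carrier_def)

lemma sd_conj_closed_sd_class:
  assumes x: "x \<in> sd_carrier n"
  shows "sd_conj_closed n (sd_class n x)"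
  unfolding sd_conj_closed_def
proof (intro ballI impI)
  fix a b c assume abc: "a \<in> sd_carrier n" "b \<in> sd_carrier n" "c \<in> sd_carrier n"
    and conj: "sd_mult n a b = sd_mult n c a"
  have snd_c: "snd c = snd b"
    by (rule sd_conj_snd[OF abc conj])
  show "b \<in> sd_class n x \<longleftrightarrow> c \<in> sd_class n x"
  proof (cases "snd x = 0 \<and> snd b = 0")
    case True
    define f where "f y = y * (2 * n - 1) mod (4 * n)" for y
    obtain i where i: "x = (i, 0)" "i < 4 * n"
      using x True by (cases x) (auto simp: sd_carrier_def less_2_cases_iff)
    have class_eq: "sd_class n x = {(i, 0), (f i, 0)}"
      by (simp add: sd_class_def i f_def)
    have closed: "f y \<in> {i, f i}" if "y \<in> {i, f i}" for y
      using that sd_unit_involution[OF i(2)] by (auto simp: f_def)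
    obtain ja ea jb jc where abc_eq: "a = (ja, ea)" "b = (jb, 0)" "c = (jc, 0)"
      using True snd_c by (cases a, cases b, cases c) auto
    have jb: "jb < 4 * n" and ea: "ea = 0 \<or> ea = 1"
      using abc by (auto simp: abc_eq sd_carrier_def)
    have jc: "jc = jb * (2 * n - 1) ^ ea mod (4 * n)"
      using sd_conj_rotation[OF abc conj] by (simp add: abc_eq)
    have "jb \<in> {i, f i} \<longleftrightarrow> jc \<in> {i, f i}"
    proof (cases "ea = 0")
      case True
      then show ?thesis using jb jc by simp
    next
      case False
      then have "jc = f jb" "jb = f jc"
        using ea jc sd_unit_involution[OF jb] by (simp_all add: f_def)
      then show ?thesis using closed by metis
    qed
    then show ?thesis
      unfolding class_eq abc_eq by simp
  next
    case False
    then show ?thesis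
      using sd_conj_reflection[OF conj] snd_c abc(2,3)
      by (auto simp: sd_class_def sd_carrier_def)
  qed
qed

lemma inn_der_eq_0_refl_shift:
  assumes z: "inn_der n \<beta> = 0" and k: "k < 4 * n"
  shows "\<beta> ((k + sd_refl_modulus n) mod (4 * n), 1) = \<beta> (k, 1)"
proof -
  define d where "d = sd_refl_modulus n"
  define s :: nat where "s = (if even n then n + 1 else 2)"
  \<comment> \<open>conjugation by \<open>a^s\<close> shifts the exponent of \<open>a^k b\<close> by \<open>d\<close>\<close>
  have "[d + s * (2 * n - 1) = s] (mod (4 * n))"
  proof (cases "even n")
    case True
    then obtain m where m: "n = 2 * m" by (auto elim: evenE)
    then have "d + s * (2 * n - 1) = s + m * (4 * n)"
      using True n_pos by (cases m) (auto simp: d_def s_def sd_refl_modulus_def algebra_simps)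
    then show ?thesis by (simp add: cong_def)
  next
    case False
    then have "d + s * (2 * n - 1) = s + 1 * (4 * n)"
      using n_pos by (simp add: d_def s_def sd_refl_modulus_def)
    then show ?thesis by (simp only: cong_def mod_mult_self1)
  qed
  then have "[k + (d + s * (2 * n - 1)) = k + s] (mod (4 * n))"
    by (rule cong_add[OF cong_refl])
  then have "((k + d) mod (4 * n) + s * (2 * n - 1)) mod (4 * n) = (s + k) mod (4 * n)"
    by (simp add: cong_def mod_add_left_eq add.assoc add.commute[of k])
  then have "sd_mult n ((k + d) mod (4 * n), 1) (s, 0) = sd_mult n (s, 0) (k, 1)"
    by (simp add: sd_mult_def)
  moreover have "s < 4 * n"
    using n_pos by (simp add: s_def)
  then have "(s, 0) \<in> sd_carrier n" "(k, 1) \<in> sd_carrier n" "((k + d) mod (4 * n), 1) \<in> sd_carrier n"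
    using n_pos k by (simp_all add: sd_carrier_def)
  ultimately show ?thesis
    unfolding d_def by (rule inn_der_eq_0_imp_conj_eq[OF z, rotated -1])
qed

lemma inn_der_eq_0_refl_shift_iter:
  assumes z: "inn_der n \<beta> = 0" and k: "k < 4 * n"
  shows "\<beta> ((k + sd_refl_modulus n * t) mod (4 * n), 1) = \<beta> (k, 1)"
proof (induction t)
  case (Suc t)
  let ?d = "sd_refl_modulus n"
  have "(k + ?d * Suc t) mod (4 * n) = ((k + ?d * t) mod (4 * n) + ?d) mod (4 * n)"
    unfolding mod_add_left_eq by (simp add: add_ac)
  then show ?case
    using inn_der_eq_0_refl_shift[OF z, of "(k + ?d * t) mod (4 * n)"] n_pos Suc by simp
qed (use k in simp)

lemma inn_der_eq_0_const_on_sd_class: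
  assumes z: "inn_der n \<beta> = 0" and x: "x \<in> sd_carrier n" and y: "y \<in> sd_class n x"
  shows "\<beta> y = \<beta> x"
proof (cases "snd x = 0")
  case True
  then obtain i where i: "x = (i, 0)" "i < 4 * n"
    using x by (cases x) (auto simp: sd_carrier_def less_2_cases_iff)
  have "sd_mult n (i * (2 * n - 1) mod (4 * n), 0) (0, 1) = sd_mult n (0, 1) (i, 0)"
    by (simp add: sd_mult_def)
  then have "\<beta> (i * (2 * n - 1) mod (4 * n), 0) = \<beta> (i, 0)"
    using n_pos i(2) by (intro inn_der_eq_0_imp_conj_eq[OF z]) (auto simp: sd_carrier_def)
  then show ?thesis
    using y by (auto simp: sd_class_def i)
next
  case False
  let ?d = "sd_refl_modulus n"
  obtain i j where ij: "x = (i, 1)" "y = (j, 1)" "i < 4 * n" "j < 4 * n" "j mod ?d = i mod ?d"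
    using x y False by (cases x, cases y) (auto simp: sd_class_def sd_carrier_def)
  have "(j + 4 * n) mod ?d = i mod ?d"
    using ij(5) sd_refl_modulus_dvd by (simp add: mod_add_right_eq[symmetric])
  then have "?d dvd j + 4 * n - i"
    using ij(3) by (simp add: mod_eq_dvd_iff_nat)
  then obtain t where "j + 4 * n - i = ?d * t"
    by (elim dvdE)
  then have "i + ?d * t = j + 4 * n"
    using ij(3) by simp
  then have "(i + ?d * t) mod (4 * n) = j"
    using ij(4) by simp
  then show ?thesis
    using inn_der_eq_0_refl_shift_iter[OF z ij(3), of t] by (simp add: ij)
qed

section \<open>A set omitting one element of each class\<close>

lemma sd_rotation_partner_sum:
  assumes i: "i < 4 * n"
  defines "j \<equiv> i * (2 * n - 1) mod (4 * n)"
  shows "i + j \<in> (if even i then {0, 4 * n} else {2 * n, 6 * n})"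
proof -
  have "i * (2 * n - 1) + i = 2 * n * i"
    using n_pos by (simp add: algebra_simps diff_mult_distrib2)
  then have "(i + j) mod (4 * n) = 2 * n * i mod (4 * n)"
    by (simp add: j_def mod_add_right_eq add.commute)
  also have "2 * n * i = (if even i then 0 else 2 * n) + i div 2 * (4 * n)"
    by (auto elim!: evenE oddE)
  also have "\<dots> mod (4 * n) = (if even i then 0 else 2 * n)"
    using n_pos by simp
  finally have "i + j = (i + j) div (4 * n) * (4 * n) + (if even i then 0 else 2 * n)"
    using div_mult_mod_eq[of "i + j" "4 * n"] by simp
  moreover have "j < 4 * n"
    using n_pos by (simp add: j_def)
  then have "(i + j) div (4 * n) < 2"
    using i by (simp add: div_less_iff_less_mult)
  ultimately show ?thesis
    by (auto simp: less_2_cases_iff)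
qed

lemma rotation_in_sd_basis_iff_partner:
  assumes i: "i < 4 * n"
  defines "j \<equiv> i * (2 * n - 1) mod (4 * n)"
  shows "(i, 0) \<in> sd_basis n \<longleftrightarrow> j \<noteq> i \<and> (j, 0) \<notin> sd_basis n"
proof -
  have j: "j < 4 * n"
    using n_pos by (simp add: j_def)
  have sum: "i + j \<in> (if even i then {0, 4 * n} else {2 * n, 6 * n})"
    unfolding j_def by (rule sd_rotation_partner_sum[OF i])
  then have "even (i + j)"
    by (cases "even i") (auto simp del: even_add)
  then have "even j \<longleftrightarrow> even i"
    by simp
  then show ?thesis
    using i j sum by (auto simp: sd_basis_def split: if_splits)
qed

lemma odd_4n_minus_1: "odd (4 * n - 1)"
proof -
  have "4 * n - 1 = 2 * (2 * n - 1) + 1"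
    using n_pos by simp
  then show ?thesis by simp
qed

lemma sd_refl_rep_less: "sd_refl_rep n i < 4 * n"
  using n_pos by (auto simp: sd_refl_rep_def)

lemma sd_refl_rep_mod: "sd_refl_rep n i mod sd_refl_modulus n = i mod sd_refl_modulus n"
  using odd_4n_minus_1 by (simp add: sd_refl_rep_def sd_refl_modulus_def mod2_eq_if)

lemma sd_refl_rep_cong:
  "i mod sd_refl_modulus n = j mod sd_refl_modulus n \<Longrightarrow> sd_refl_rep n i = sd_refl_rep n j"
  by (simp add: sd_refl_rep_def sd_refl_modulus_def mod2_eq_if split: if_splits)

lemma reflection_notin_sd_basis_iff:
  assumes "i < 4 * n"
  shows "(i, 1) \<notin> sd_basis n \<longleftrightarrow> i = sd_refl_rep n i"
proof (cases "even n")
  case True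
  have "i = 4 * n - 1 \<longleftrightarrow> i + 1 = 4 * n"
    using n_pos by auto
  then show ?thesis
    using assms True odd_4n_minus_1 by (auto simp: sd_basis_def sd_refl_rep_def)
next
  case False
  have "i mod 4 = i \<longleftrightarrow> i < 4"
    by (metis mod_less mod_less_divisor zero_less_numeral)
  then show ?thesis
    using assms False by (auto simp: sd_basis_def sd_refl_rep_def)
qed

lemma sd_class_meets_complement:
  assumes x: "x \<in> sd_carrier n"
  shows "\<exists>y\<in>sd_class n x. y \<notin> sd_basis n"
proof (cases "x \<in> sd_basis n")
  case False
  then show ?thesis using self_in_sd_class[OF x] by blast
next
  case True
  obtain i e where ie: "x = (i, e)" "i < 4 * n" "e = 0 \<or> e = 1"
    using x by (cases x) (auto simp: sd_carrier_def less_2_cases_iff)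
  show ?thesis
  proof (cases "e = 0")
    case e: True
    then have "(i * (2 * n - 1) mod (4 * n), 0) \<notin> sd_basis n"
      using True rotation_in_sd_basis_iff_partner[OF ie(2)] by (simp add: ie)
    then show ?thesis
      by (intro bexI[of _ "(i * (2 * n - 1) mod (4 * n), 0)"]) (auto simp: sd_class_def ie e)
  next
    case False
    then have e: "e = 1" using ie(3) by simp
    let ?r = "sd_refl_rep n i"
    have "?r < 4 * n" "?r mod sd_refl_modulus n = i mod sd_refl_modulus n"
      by (rule sd_refl_rep_less, rule sd_refl_rep_mod)
    moreover from this have "(?r, 1) \<notin> sd_basis n"
      using reflection_notin_sd_basis_iff sd_refl_rep_cong by metis
    ultimately show ?thesis
      by (intro bexI[of _ "(?r, 1)"]) (auto simp: sd_class_def sd_carrier_def ie e)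
  qed
qed

lemma sd_class_minus_subset_sd_basis:
  assumes t: "t \<in> sd_carrier n" and nt: "t \<notin> sd_basis n"
  shows "sd_class n t - {t} \<subseteq> sd_basis n"
proof
  fix y assume y: "y \<in> sd_class n t - {t}"
  obtain i e where ie: "t = (i, e)" "i < 4 * n" "e = 0 \<or> e = 1"
    using t by (cases t) (auto simp: sd_carrier_def less_2_cases_iff)
  show "y \<in> sd_basis n"
  proof (cases "e = 0")
    case e: True
    then have "i * (2 * n - 1) mod (4 * n) = i \<or> (i * (2 * n - 1) mod (4 * n), 0) \<in> sd_basis n"
      using nt rotation_in_sd_basis_iff_partner[OF ie(2)] by (auto simp: ie)
    then show ?thesis
      using y by (auto simp: sd_class_def ie e)
  next
    case False
    then have e: "e = 1" using ie(3) by simp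
    obtain j where j: "y = (j, 1)" "j < 4 * n" "j \<noteq> i" "j mod sd_refl_modulus n = i mod sd_refl_modulus n"
      using y by (cases y) (auto simp: sd_class_def sd_carrier_def ie e)
    have "i = sd_refl_rep n i"
      using nt ie(2) reflection_notin_sd_basis_iff by (simp add: ie e)
    then have "j \<noteq> sd_refl_rep n j"
      using j(3,4) sd_refl_rep_cong by metis
    then show ?thesis
      using reflection_notin_sd_basis_iff[OF j(2)] j(1) by blast
  qed
qed

lemma sd_basis_subset: "sd_basis n \<subseteq> sd_carrier n"
  by (auto simp: sd_basis_def sd_carrier_def)

lemma inn_der_eq_0_vanishing_off_sd_basis:
  fixes \<beta> :: "nat \<times> nat \<Rightarrow> 'a::field"
  assumes z: "inn_der n \<beta> = 0" and off: "\<And>x. x \<notin> sd_basis n \<Longrightarrow> \<beta> x = 0"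
  shows "\<beta> = 0"
proof
  fix x
  show "\<beta> x = 0 x"
  proof (cases "x \<in> sd_carrier n")
    case True
    then obtain y where "y \<in> sd_class n x" "y \<notin> sd_basis n"
      using sd_class_meets_complement by blast
    then show ?thesis
      using inn_der_eq_0_const_on_sd_class[OF z True] off by fastforce
  next
    case False
    then have "x \<notin> sd_basis n"
      using sd_basis_subset by blast
    then show ?thesis
      using off by simp
  qed
qed

lemma inn_der_elem_in_span_sd_basis:
  assumes t: "t \<in> sd_carrier n" "t \<notin> sd_basis n"
  shows "inn_der_elem n t \<in> module.span der_scale (inn_der_elem n ` sd_basis n :: (_ \<Rightarrow> (nat \<times> nat \<Rightarrow> 'a::field)) set)"
proof -
  interpret V: vector_space "der_scale :: 'a \<Rightarrow> ((nat \<times> nat \<Rightarrow> 'a) \<Rightarrow> (nat \<times> nat \<Rightarrow> 'a)) \<Rightarrow> _"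
    by (rule vector_space_der_scale)
  let ?S = "sd_class n t"
  have S: "?S \<subseteq> sd_carrier n" "finite ?S" "t \<in> ?S"
    using sd_class_subset[OF t(1)] self_in_sd_class[OF t(1)] finite_sd_carrier finite_subset
    by auto
  have "inn_der_elem n t + (\<Sum>s\<in>?S - {t}. inn_der_elem n s) = (\<Sum>s\<in>?S. inn_der_elem n s)"
    using S(2,3) by (simp add: sum.remove)
  also have "\<dots> = (0 :: (_ \<Rightarrow> (nat \<times> nat \<Rightarrow> 'a)))"
    using sum_inn_der_elem_conj_closed[OF S(1) sd_conj_closed_sd_class[OF t(1)]] by simp
  finally have "inn_der_elem n t = - (\<Sum>s\<in>?S - {t}. inn_der_elem n s :: (_ \<Rightarrow> (nat \<times> nat \<Rightarrow> 'a)))"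
    by (simp add: eq_neg_iff_add_eq_0)
  also have "\<dots> \<in> V.span (inn_der_elem n ` sd_basis n)"
    using sd_class_minus_subset_sd_basis[OF t] by (intro V.span_neg V.span_sum V.span_base) auto
  finally show ?thesis .
qed

lemma inn_der_elem_sd_basis:
  "\<not> module.dependent der_scale (inn_der_elem n ` sd_basis n :: (_ \<Rightarrow> (nat \<times> nat \<Rightarrow> 'a::field)) set)
    \<and> module.span der_scale (inn_der_elem n ` sd_basis n :: (_ \<Rightarrow> (nat \<times> nat \<Rightarrow> 'a)) set) = Der_inn n
    \<and> vector_space.dim der_scale (Der_inn n :: (_ \<Rightarrow> (nat \<times> nat \<Rightarrow> 'a)) set) = card (sd_basis n)"
  by (rule inn_der_elem_basis[OF sd_basis_subset inn_der_eq_0_vanishing_off_sd_basis inn_der_elem_in_span_sd_basis])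

end

section \<open>The index sets of the theorem\<close>

lemma sd_a_nonneg: "0 \<le> z \<Longrightarrow> z < 4 * int n \<Longrightarrow> sd_a n z = (nat z, 0)"
  by (simp add: sd_a_def)

lemma sd_ab_nonneg: "0 \<le> z \<Longrightarrow> z < 4 * int n \<Longrightarrow> sd_ab n z = (nat z, 1)"
  by (simp add: sd_ab_def)

lemma sd_a_neg: "z < 0 \<Longrightarrow> - (4 * int n) \<le> z \<Longrightarrow> sd_a n z = (nat (z + 4 * int n), 0)"
proof -
  assume a: "z < 0" "- (4 * int n) \<le> z"
  have "z mod (4 * int n) = (z + 4 * int n) mod (4 * int n)" by simp
  also have "\<dots> = z + 4 * int n" using a by (intro mod_pos_pos_trivial) auto
  finally show ?thesis by (simp add: sd_a_def)
qed

lemma sd_a_evens_eq: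
  "{sd_a n (2 * k) | k. 1 \<le> k \<and> k \<le> int n - 1} = {(i, 0::nat) | i. even i \<and> 0 < i \<and> i < 2 * n}"
proof (intro set_eqI iffI)
  fix x assume "x \<in> {sd_a n (2 * k) | k. 1 \<le> k \<and> k \<le> int n - 1}"
  then obtain k where k: "1 \<le> k" "k \<le> int n - 1" "x = sd_a n (2 * k)"
    by blast
  then have "x = (2 * nat k, 0)"
    by (simp add: sd_a_nonneg nat_mult_distrib)
  then show "x \<in> {(i, 0::nat) | i. even i \<and> 0 < i \<and> i < 2 * n}"
    using k by auto
next
  fix x assume "x \<in> {(i, 0::nat) | i. even i \<and> 0 < i \<and> i < 2 * n}"
  then obtain q where q: "x = (2 * q, 0)" "0 < q" "q < n"
    by (auto elim!: evenE)
  then have "x = sd_a n (2 * int q)"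
    by (subst sd_a_nonneg) auto
  then show "x \<in> {sd_a n (2 * k) | k. 1 \<le> k \<and> k \<le> int n - 1}"
    using q by (auto intro!: exI[of _ "int q"])
qed

lemma sd_a_odds_eq:
  assumes "m \<le> n"
  shows "{sd_a n (2 * k + 1) | k. - int m \<le> k \<and> k \<le> int m - 1}
       = {(i, 0::nat) | i. odd i \<and> (i < 2 * m \<or> 4 * n < i + 2 * m \<and> i < 4 * n)}"
proof (intro set_eqI iffI)
  fix x assume "x \<in> {sd_a n (2 * k + 1) | k. - int m \<le> k \<and> k \<le> int m - 1}"
  then obtain k where k: "- int m \<le> k" "k \<le> int m - 1" "x = sd_a n (2 * k + 1)"
    by blast
  show "x \<in> {(i, 0::nat) | i. odd i \<and> (i < 2 * m \<or> 4 * n < i + 2 * m \<and> i < 4 * n)}"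
  proof (cases "0 \<le> k")
    case True
    then have "x = (2 * nat k + 1, 0)"
      using k assms by (simp add: sd_a_nonneg nat_add_distrib nat_mult_distrib)
    then show ?thesis using k True by auto
  next
    case False
    then have "x = (2 * nat (k + 2 * int n) + 1, 0)"
      using k assms by (simp add: sd_a_neg nat_add_distrib nat_mult_distrib)
    then show ?thesis using k False by auto
  qed
next
  fix x assume "x \<in> {(i, 0::nat) | i. odd i \<and> (i < 2 * m \<or> 4 * n < i + 2 * m \<and> i < 4 * n)}"
  then obtain q where q: "x = (2 * q + 1, 0)" "2 * q + 1 < 2 * m \<or> 4 * n < 2 * q + 1 + 2 * m \<and> 2 * q + 1 < 4 * n"
    by (auto elim!: oddE)
  show "x \<in> {sd_a n (2 * k + 1) | k. - int m \<le> k \<and> k \<le> int m - 1}"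
  proof (cases "2 * q + 1 < 2 * m")
    case True
    then have "x = sd_a n (2 * int q + 1)"
      using q(1) assms by (subst sd_a_nonneg) auto
    then show ?thesis using True by force
  next
    case False
    then have "x = sd_a n (2 * (int q - 2 * int n) + 1)"
      using q by (subst sd_a_neg) auto
    then show ?thesis using False q(2) by (auto intro!: exI[of _ "int q - 2 * int n"])
  qed
qed

lemma sd_ab_evens_eq:
  "{sd_ab n (2 * k) | k. 1 \<le> k \<and> k \<le> 2 * int n - 1} = {(i, 1::nat) | i. even i \<and> 0 < i \<and> i + 1 < 4 * n}"
proof (intro set_eqI iffI)
  fix x assume "x \<in> {sd_ab n (2 * k) | k. 1 \<le> k \<and> k \<le> 2 * int n - 1}"
  then obtain k where k: "1 \<le> k" "k \<le> 2 * int n - 1" "x = sd_ab n (2 * k)"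
    by blast
  then have "x = (2 * nat k, 1)"
    by (simp add: sd_ab_nonneg nat_mult_distrib)
  then show "x \<in> {(i, 1::nat) | i. even i \<and> 0 < i \<and> i + 1 < 4 * n}"
    using k by auto
next
  fix x assume "x \<in> {(i, 1::nat) | i. even i \<and> 0 < i \<and> i + 1 < 4 * n}"
  then obtain q where q: "x = (2 * q, 1)" "0 < q" "2 * q + 1 < 4 * n"
    by (auto elim!: evenE)
  then have "x = sd_ab n (2 * int q)"
    by (subst sd_ab_nonneg) auto
  then show "x \<in> {sd_ab n (2 * k) | k. 1 \<le> k \<and> k \<le> 2 * int n - 1}"
    using q by (auto intro!: exI[of _ "int q"])
qed

lemma sd_ab_odds_eq:
  "{sd_ab n (2 * k - 1) | k. 1 \<le> k \<and> k \<le> 2 * int n - 1} = {(i, 1::nat) | i. odd i \<and> i + 1 < 4 * n}"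
proof (intro set_eqI iffI)
  fix x assume "x \<in> {sd_ab n (2 * k - 1) | k. 1 \<le> k \<and> k \<le> 2 * int n - 1}"
  then obtain k where k: "1 \<le> k" "k \<le> 2 * int n - 1" "x = sd_ab n (2 * k - 1)"
    by blast
  then have "x = (2 * nat (k - 1) + 1, 1)"
    by (simp add: sd_ab_nonneg nat_add_distrib nat_mult_distrib)
  then show "x \<in> {(i, 1::nat) | i. odd i \<and> i + 1 < 4 * n}"
    using k by auto
next
  fix x assume "x \<in> {(i, 1::nat) | i. odd i \<and> i + 1 < 4 * n}"
  then obtain q where q: "x = (2 * q + 1, 1)" "2 * q + 2 < 4 * n"
    by (auto elim!: oddE)
  then have "x = sd_ab n (2 * (int q + 1) - 1)"
    by (subst sd_ab_nonneg) auto
  then show "x \<in> {sd_ab n (2 * k - 1) | k. 1 \<le> k \<and> k \<le> 2 * int n - 1}"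
    using q by (auto intro!: exI[of _ "int q + 1"])
qed

lemma sd_ab_blocks_eq:
  "{sd_ab n (4 * k + j) | k j. 1 \<le> k \<and> k \<le> int n - 1 \<and> j \<in> {0, 1, 2, 3}} = {(i, 1::nat) | i. 4 \<le> i \<and> i < 4 * n}"
proof (intro set_eqI iffI)
  fix x assume "x \<in> {sd_ab n (4 * k + j) | k j. 1 \<le> k \<and> k \<le> int n - 1 \<and> j \<in> {0, 1, 2, 3}}"
  then obtain k j where k: "1 \<le> k" "k \<le> int n - 1" "j \<in> {0, 1, 2, 3}" "x = sd_ab n (4 * k + j)"
    by blast
  moreover have "0 \<le> j" "j \<le> 3"
    using k(3) by auto
  ultimately have "x = (nat (4 * k + j), 1)"
    by (simp add: sd_ab_nonneg)
  then show "x \<in> {(i, 1::nat) | i. 4 \<le> i \<and> i < 4 * n}"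
    using k \<open>0 \<le> j\<close> by auto
next
  fix x assume "x \<in> {(i, 1::nat) | i. 4 \<le> i \<and> i < 4 * n}"
  then obtain i where i: "x = (i, 1)" "4 \<le> i" "i < 4 * n"
    by blast
  have "i = 4 * (i div 4) + i mod 4"
    by simp
  then have "int i = 4 * int (i div 4) + int (i mod 4)"
    by (metis of_nat_add of_nat_mult of_nat_numeral)
  then have x: "x = sd_ab n (4 * int (i div 4) + int (i mod 4))"
    using i by (subst sd_ab_nonneg) auto
  have "i mod 4 = 0 \<or> i mod 4 = 1 \<or> i mod 4 = 2 \<or> i mod 4 = 3"
    using mod_less_divisor[of 4 i] by linarith
  then have "int (i mod 4) \<in> {0, 1, 2, 3}"
    by auto
  then show "x \<in> {sd_ab n (4 * k + j) | k j. 1 \<le> k \<and> k \<le> int n - 1 \<and> j \<in> {0, 1, 2, 3}}"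
    using i x by (intro CollectI exI[of _ "int (i div 4)"] exI[of _ "int (i mod 4)"]) auto
qed

lemma basis_even_eq_sd_basis:
  assumes "even n"
  shows "basis_even n = sd_basis n"
proof (intro set_eqI)
  obtain m where m: "n = 2 * m"
    using assms by (elim evenE)
  have half: "int n div 2 = int m" "m \<le> n"
    using m by simp_all
  fix x :: "nat \<times> nat"
  obtain q e where "x = (2 * q, e) \<or> x = (2 * q + 1, e)"
    by (metis oddE evenE prod.collapse)
  then show "x \<in> basis_even n \<longleftrightarrow> x \<in> sd_basis n"
    unfolding basis_even_def half(1) sd_a_evens_eq sd_a_odds_eq[OF half(2)] sd_ab_evens_eq sd_ab_odds_eq
    using m by (auto simp: sd_basis_def)
qed

lemma basis_odd_eq_sd_basis:
  assumes "odd n"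
  shows "basis_odd n = sd_basis n"
proof (intro set_eqI)
  obtain m where m: "n = 2 * m + 1"
    using assms by (elim oddE)
  have half: "(int n - 1) div 2 = int m" "m \<le> n"
    using m by simp_all
  fix x :: "nat \<times> nat"
  obtain q e where "x = (2 * q, e) \<or> x = (2 * q + 1, e)"
    by (metis oddE evenE prod.collapse)
  moreover have "2 * q \<noteq> 6 * m + 3"
    using Suc_double_not_eq_double[of "3 * m + 1" q] by simp
  ultimately show "x \<in> basis_odd n \<longleftrightarrow> x \<in> sd_basis n"
    unfolding basis_odd_def half(1) sd_a_evens_eq sd_a_odds_eq[OF half(2)] sd_ab_blocks_eq
    using m by (auto simp: sd_basis_def)
qed

lemma int_mod_eq_imp_eq:
  fixes M z1 z2 :: int
  assumes "z1 mod M = z2 mod M" "\<bar>z1 - z2\<bar> < M"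
  shows "z1 = z2"
proof (rule ccontr)
  assume "z1 \<noteq> z2"
  moreover have "M dvd z1 - z2"
    using assms(1) by (simp add: mod_eq_dvd_iff)
  ultimately have "\<bar>M\<bar> \<le> \<bar>z1 - z2\<bar>"
    by (intro dvd_imp_le_int) auto
  then show False using assms(2) by simp
qed

lemma card_image_int_interval:
  assumes "inj_on f {a..b::int}"
  shows "card {f k | k. a \<le> k \<and> k \<le> b} = nat (b - a + 1)"
proof -
  have "{f k | k. a \<le> k \<and> k \<le> b} = f ` {a..b}" by auto
  then show ?thesis using card_image[OF assms] by simp
qed

context
  fixes n :: nat
  assumes n_pos: "1 \<le> n"
begin

lemma sd_mod_bounds: "0 \<le> z mod (4 * int n)" "z mod (4 * int n) < 4 * int n"
  using n_pos by simp_all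

lemma sd_a_in_carrier: "sd_a n z \<in> sd_carrier n"
  using sd_mod_bounds[of z] by (simp add: sd_a_def sd_carrier_def nat_less_iff)

lemma sd_ab_in_carrier: "sd_ab n z \<in> sd_carrier n"
  using sd_mod_bounds[of z] by (simp add: sd_ab_def sd_carrier_def nat_less_iff)

lemma sd_a_inj:
  assumes "sd_a n z1 = sd_a n z2" "\<bar>z1 - z2\<bar> < 4 * int n"
  shows "z1 = z2"
proof (rule int_mod_eq_imp_eq[OF _ assms(2)])
  show "z1 mod (4 * int n) = z2 mod (4 * int n)"
    using assms(1) by (simp add: sd_a_def eq_nat_nat_iff sd_mod_bounds(1))
qed

lemma sd_ab_inj:
  assumes "sd_ab n z1 = sd_ab n z2" "\<bar>z1 - z2\<bar> < 4 * int n"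
  shows "z1 = z2"
proof (rule int_mod_eq_imp_eq[OF _ assms(2)])
  show "z1 mod (4 * int n) = z2 mod (4 * int n)"
    using assms(1) by (simp add: sd_ab_def eq_nat_nat_iff sd_mod_bounds(1))
qed

lemma card_sd_a_evens: "card {sd_a n (2 * k) | k. 1 \<le> k \<and> k \<le> int n - 1} = n - 1"
proof -
  have "inj_on (\<lambda>k. sd_a n (2 * k)) {1..int n - 1}"
    by (rule inj_onI) (use sd_a_inj in force)
  then show ?thesis by (subst card_image_int_interval) auto
qed

lemma card_sd_a_odds:
  assumes "m \<le> n"
  shows "card {sd_a n (2 * k + 1) | k. - int m \<le> k \<and> k \<le> int m - 1} = 2 * m"
proof -
  have "inj_on (\<lambda>k. sd_a n (2 * k + 1)) {- int m..int m - 1}"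
    using assms by (intro inj_onI) (use sd_a_inj in force)
  then show ?thesis by (subst card_image_int_interval) auto
qed

lemma card_sd_ab_evens: "card {sd_ab n (2 * k) | k. 1 \<le> k \<and> k \<le> 2 * int n - 1} = 2 * n - 1"
proof -
  have "inj_on (\<lambda>k. sd_ab n (2 * k)) {1..2 * int n - 1}"
    by (rule inj_onI) (use sd_ab_inj in force)
  then show ?thesis by (subst card_image_int_interval) auto
qed

lemma card_sd_ab_odds: "card {sd_ab n (2 * k - 1) | k. 1 \<le> k \<and> k \<le> 2 * int n - 1} = 2 * n - 1"
proof -
  have "inj_on (\<lambda>k. sd_ab n (2 * k - 1)) {1..2 * int n - 1}"
    by (rule inj_onI) (use sd_ab_inj in force)
  then show ?thesis by (subst card_image_int_interval) auto
qed

lemma card_basis_even: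
  assumes "even n"
  shows "card (basis_even n) = 3 * (2 * n - 1)"
proof -
  define A1 where "A1 = {sd_a n (2 * k) | k. 1 \<le> k \<and> k \<le> int n - 1}"
  define A2 where "A2 = {sd_a n (2 * k + 1) | k. - int (n div 2) \<le> k \<and> k \<le> int (n div 2) - 1}"
  define A3 where "A3 = {sd_ab n (2 * k) | k. 1 \<le> k \<and> k \<le> 2 * int n - 1}"
  define A4 where "A4 = {sd_ab n (2 * k - 1) | k. 1 \<le> k \<and> k \<le> 2 * int n - 1}"
  have "int n div 2 = int (n div 2)"
    by simp
  then have "basis_even n = A1 \<union> A2 \<union> A3 \<union> A4"
    by (simp add: basis_even_def A1_def A2_def A3_def A4_def)
  moreover have "finite A1" "finite A2" "finite A3" "finite A4"
    using sd_a_in_carrier sd_ab_in_carrier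
    by (auto simp: A1_def A2_def A3_def A4_def intro: finite_subset[OF _ finite_sd_carrier])
  moreover have "A1 \<inter> A2 = {}" "(A1 \<union> A2) \<inter> A3 = {}" "(A1 \<union> A2 \<union> A3) \<inter> A4 = {}"
    unfolding A1_def A2_def A3_def A4_def sd_a_evens_eq sd_a_odds_eq[OF div_le_dividend]
      sd_ab_evens_eq sd_ab_odds_eq
    by auto
  moreover have "card A1 = n - 1" "card A2 = 2 * (n div 2)" "card A3 = 2 * n - 1" "card A4 = 2 * n - 1"
    unfolding A1_def A2_def A3_def A4_def
    by (rule card_sd_a_evens, rule card_sd_a_odds, simp, rule card_sd_ab_evens, rule card_sd_ab_odds)
  ultimately show ?thesis
    using n_pos assms by (simp add: card_Un_disjoint)
qed

lemma card_basis_odd: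
  assumes "odd n"
  shows "card (basis_odd n) = 6 * (n - 1)"
proof -
  define A1 where "A1 = {sd_a n (2 * k) | k. 1 \<le> k \<and> k \<le> int n - 1}"
  define A2 where "A2 = {sd_a n (2 * k + 1) | k. - int ((n - 1) div 2) \<le> k \<and> k \<le> int ((n - 1) div 2) - 1}"
  define A3 where "A3 = {(i, 1::nat) | i. 4 \<le> i \<and> i < 4 * n}"
  have "(int n - 1) div 2 = int ((n - 1) div 2)"
    using assms by (auto elim!: oddE)
  then have "basis_odd n = A1 \<union> A2 \<union> A3"
    unfolding basis_odd_def A1_def A2_def A3_def sd_ab_blocks_eq by (rule arg_cong)
  moreover have "finite A1" "finite A2" "finite A3"
    using sd_a_in_carrier
    by (auto simp: A1_def A2_def A3_def intro: finite_subset[OF _ finite_sd_carrier])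
  moreover have "A1 \<inter> A2 = {}" "(A1 \<union> A2) \<inter> A3 = {}"
    unfolding A1_def A2_def A3_def sd_a_evens_eq sd_a_odds_eq[OF diff_le_self[THEN div_le_dividend[THEN le_trans]]]
    by auto
  moreover have "card A2 = 2 * ((n - 1) div 2)"
    unfolding A2_def by (rule card_sd_a_odds) simp
  moreover have "A3 = (\<lambda>i. (i, 1)) ` {4..<4 * n}"
    by (auto simp: A3_def)
  then have "card A3 = 4 * n - 4"
    by (simp add: card_image inj_on_def)
  moreover have "card A1 = n - 1"
    unfolding A1_def by (rule card_sd_a_evens)
  ultimately show ?thesis
    using n_pos assms by (simp add: card_Un_disjoint)
qed

end

theorem theorem5p5:
  fixes n :: nat
  assumes "n \<ge> 1"
  shows "vector_space.dim (der_scale :: 'a::field \<Rightarrow> _) (Der_inn n :: (_ \<Rightarrow> (nat \<times> nat \<Rightarrow> 'a)) set)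
           = (if even n then 3 * (2 * n - 1) else 6 * (n - 1))
       \<and> (even n \<longrightarrow>
            \<not> module.dependent (der_scale :: 'a \<Rightarrow> _) ((\<lambda>g. inn_der n (ga_elem g :: nat \<times> nat \<Rightarrow> 'a)) ` basis_even n)
          \<and> module.span (der_scale :: 'a \<Rightarrow> _) ((\<lambda>g. inn_der n (ga_elem g :: nat \<times> nat \<Rightarrow> 'a)) ` basis_even n)
              = Der_inn n)
       \<and> (odd n \<longrightarrow>
            \<not> module.dependent (der_scale :: 'a \<Rightarrow> _) ((\<lambda>g. inn_der n (ga_elem g :: nat \<times> nat \<Rightarrow> 'a)) ` basis_odd n)
          \<and> module.span (der_scale :: 'a \<Rightarrow> _) ((\<lambda>g. inn_der n (ga_elem g :: nat \<times> nat \<Rightarrow> 'a)) ` basis_odd n)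
              = Der_inn n)"
proof -
  note basis = inn_der_elem_sd_basis[OF assms, where 'a = 'a]
  show ?thesis
  proof (cases "even n")
    case True
    then show ?thesis
      using basis card_basis_even[OF assms True] by (simp add: basis_even_eq_sd_basis)
  next
    case False
    then show ?thesis
      using basis card_basis_odd[OF assms False] by (simp add: basis_odd_eq_sd_basis)
  qed
qed

end
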